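(* Let $a\ge b\ge1$ be integers with either $b\ge2$, or $b=1$ and $a\ge5$, and $A=\begin{pmatrix}2&-a\\-b&2\end{pmatrix}$. For $j\in\mathbb Z_+$ set $\eta_j=-\langle\beta_1^j,(\beta_2^0)^\vee\rangle$ and $\gamma_j=-\langle\beta_2^{2j},(\beta_1^0)^\vee\rangle$. Then both sequences $\xi_j:=\eta_{2j}$ and $\zeta_j:=\eta_{2j+1}$ satisfy the recurrence $x_j=(ab-2)x_{j-1}-x_{j-2}$ ($j\ge2$) with initial conditions $\xi_0=a$, $\xi_1=a(ab-3)$ and $\zeta_0=ab-2$, $\zeta_1=\zeta_0^2-2$. Moreover $a\gamma_j=b\xi_j$ for all $j$; $(\eta_j)$ is constant if $a=b=2$; if $b=1$ and $a\ge5$ then $\eta_1<\eta_0<\eta_3<\eta_2<\eta_5<\cdots$; and in the remaining cases ($b\ge2$, $(a,b)\ne(2,2)$) $\eta_0<\eta_1<\eta_2<\cdots$.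
   Context: Let $\mathfrak g(A)$ have simple roots $\alpha_1,\alpha_2$, invariant form $(\alpha_1,\alpha_1)=2$, $(\alpha_2,\alpha_2)=2a/b$, $(\alpha_1,\alpha_2)=-a$, and for a real root $\beta$ let $\langle\lambda,\beta^\vee\rangle=2(\lambda,\beta)/(\beta,\beta)$. $\mathbb Z_+=\{0,1,2,\dots\}$. Define $c_0=d_0=0$, $c_1=d_1=1$, $c_{k+2}+c_k=a d_{k+1}$, $d_{k+2}+d_k=b c_{k+1}$, and $\beta_1^j=c_j\alpha_1+d_{j+1}\alpha_2$, $\beta_2^j=c_{j+1}\alpha_1+d_j\alpha_2$; in particular $\beta_2^0=\alpha_1$, $\beta_1^0=\alpha_2$. *)

theory Defs
  imports Main "HOL.Real"
begin

text \<open>Elements of the root lattice are represented by their coordinates (x1, x2)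
  w.r.t. the simple roots, i.e. x1 alpha1 + x2 alpha2.\<close>

definition invform :: "int \<Rightarrow> int \<Rightarrow> real \<times> real \<Rightarrow> real \<times> real \<Rightarrow> real" where
  "invform a b x y =
     2 * fst x * fst y
     + (- real_of_int a) * (fst x * snd y + snd x * fst y)
     + (2 * real_of_int a / real_of_int b) * snd x * snd y"

definition coroot_pair :: "int \<Rightarrow> int \<Rightarrow> real \<times> real \<Rightarrow> real \<times> real \<Rightarrow> real" where
  "coroot_pair a b lam beta = 2 * invform a b lam beta / invform a b beta beta"

fun cd :: "int \<Rightarrow> int \<Rightarrow> nat \<Rightarrow> int \<times> int" where
  "cd a b 0 = (0, 0)"
| "cd a b (Suc 0) = (1, 1)"
| "cd a b (Suc (Suc k)) =
     (a * snd (cd a b (Suc k)) - fst (cd a b k), b * fst (cd a b (Suc k)) - snd (cd a b k))"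

definition cseq :: "int \<Rightarrow> int \<Rightarrow> nat \<Rightarrow> int" where "cseq a b k = fst (cd a b k)"
definition dseq :: "int \<Rightarrow> int \<Rightarrow> nat \<Rightarrow> int" where "dseq a b k = snd (cd a b k)"

definition beta1 :: "int \<Rightarrow> int \<Rightarrow> nat \<Rightarrow> real \<times> real" where
  "beta1 a b j = (real_of_int (cseq a b j), real_of_int (dseq a b (Suc j)))"
definition beta2 :: "int \<Rightarrow> int \<Rightarrow> nat \<Rightarrow> real \<times> real" where
  "beta2 a b j = (real_of_int (cseq a b (Suc j)), real_of_int (dseq a b j))"

definition eta :: "int \<Rightarrow> int \<Rightarrow> nat \<Rightarrow> real" where
  "eta a b j = - coroot_pair a b (beta1 a b j) (beta2 a b 0)"
definition gamma :: "int \<Rightarrow> int \<Rightarrow> nat \<Rightarrow> real" where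
  "gamma a b j = - coroot_pair a b (beta2 a b (2 * j)) (beta1 a b 0)"

end

theory Submission
  imports Defs
begin

text \<open>Eliminating one of the coupled recurrences shows that c_k, d_k and hence
  eta_k = a d_(k+1) - 2 c_k satisfy x_(k+4) = (ab - 2) x_(k+2) - x_k. A sequence with
  x_(k+2) = r x_(k+1) - x_k, r \<ge> 2 and 0 < x_0 \<le> x_1 stays positive and nondecreasing, because
  x_(k+2) - x_(k+1) = (r - 2) x_(k+1) + (x_(k+1) - x_k). The consecutive differences of the
  interlaced sequence eta obey the same recurrence, so each ordering claim reduces to a
  polynomial inequality between the first two differences. The relation between gamma and
  eta comes from the symmetry c_k = d_k for odd k and b c_k = a d_k for even k.\<close>

definition lucas_rec :: "'a::comm_ring_1 \<Rightarrow> (nat \<Rightarrow> 'a) \<Rightarrow> bool" where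
  "lucas_rec r f \<longleftrightarrow> (\<forall>k. f (k + 2) = r * f (k + 1) - f k)"

lemma lucas_rec_lincomb:
  assumes "lucas_rec r f" and "lucas_rec r g"
  shows "lucas_rec r (\<lambda>k. x * f k + y * g k)"
  unfolding lucas_rec_def
proof
  fix k
  have f: "f (k + 2) = r * f (k + 1) - f k" and g: "g (k + 2) = r * g (k + 1) - g k"
    using assms by (simp_all add: lucas_rec_def)
  show "x * f (k + 2) + y * g (k + 2) = r * (x * f (k + 1) + y * g (k + 1)) - (x * f k + y * g k)"
    unfolding f g by (simp add: algebra_simps)
qed

lemma lucas_rec_diff:
  assumes "lucas_rec r f" and "lucas_rec r g"
  shows "lucas_rec r (\<lambda>k. f k - g k)"
  using lucas_rec_lincomb[OF assms, of 1 "-1"] by simp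

lemma lucas_rec_of_int:
  assumes "lucas_rec r f"
  shows "lucas_rec (of_int r :: 'a::comm_ring_1) (\<lambda>k. of_int (f k))"
  using assms by (simp add: lucas_rec_def)

lemma lucas_rec_ge2:
  assumes "lucas_rec r f" and "2 \<le> j"
  shows "f j = r * f (j - 1) - f (j - 2)"
proof -
  obtain k where "j = k + 2" using assms(2) by (metis le_add_diff_inverse2)
  then show ?thesis using assms(1) by (simp add: lucas_rec_def)
qed

lemma lucas_rec_pos:
  fixes f :: "nat \<Rightarrow> 'a::linordered_idom"
  assumes "2 \<le> r" and "lucas_rec r f" and "0 < f 0" and "0 \<le> f 1 - f 0"
  shows "0 < f k"
proof -
  have "0 < f k \<and> f k \<le> f (Suc k)" for k
  proof (induction k)
    case 0
    then show ?case using assms(3,4) by simp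
  next
    case (Suc k)
    have "2 * f (Suc k) \<le> r * f (Suc k)"
      using Suc assms(1) by (intro mult_right_mono) auto
    moreover have "f (Suc (Suc k)) = r * f (Suc k) - f k"
      using assms(2) by (simp add: lucas_rec_def)
    ultimately show ?case using Suc by linarith
  qed
  then show ?thesis by blast
qed

lemma cseq_Suc_Suc: "cseq a b (Suc (Suc k)) = a * dseq a b (Suc k) - cseq a b k"
  by (simp add: cseq_def dseq_def)

lemma dseq_Suc_Suc: "dseq a b (Suc (Suc k)) = b * cseq a b (Suc k) - dseq a b k"
  by (simp add: cseq_def dseq_def)

lemma cseq_dseq_01:
  "cseq a b 0 = 0" "dseq a b 0 = 0" "cseq a b (Suc 0) = 1" "dseq a b (Suc 0) = 1"
  by (simp_all add: cseq_def dseq_def)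

lemma cseq_dseq_parity:
  "(odd k \<longrightarrow> cseq a b k = dseq a b k) \<and> (even k \<longrightarrow> b * cseq a b k = a * dseq a b k)"
proof (induction a b k rule: cd.induct)
  case (3 a b k)
  then show ?case
    by (cases "even k") (auto simp: cseq_Suc_Suc dseq_Suc_Suc algebra_simps)
qed (simp_all add: cseq_dseq_01)

lemma lucas_rec_cseq: "lucas_rec (a * b - 2) (\<lambda>j. cseq a b (2 * j + p))"
  by (simp add: lucas_rec_def cseq_Suc_Suc dseq_Suc_Suc algebra_simps)

lemma lucas_rec_dseq: "lucas_rec (a * b - 2) (\<lambda>j. dseq a b (2 * j + p))"
  by (simp add: lucas_rec_def cseq_Suc_Suc dseq_Suc_Suc algebra_simps)

text \<open>Since beta2 a b 0 = alpha_1 and (alpha_1, alpha_1) = 2, eta_k = -(beta_1^k, alpha_1) is an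
  integer, and no division by b occurs.\<close>

definition eta_int :: "int \<Rightarrow> int \<Rightarrow> nat \<Rightarrow> int" where
  "eta_int a b k = a * dseq a b (Suc k) - 2 * cseq a b k"

lemma eta_eq_of_int: "eta a b k = of_int (eta_int a b k)"
  by (simp add: eta_def coroot_pair_def invform_def beta1_def beta2_def eta_int_def
      cseq_dseq_01 field_simps)

lemma gamma_eq_of_int:
  assumes "a \<noteq> 0" and "b \<noteq> 0"
  shows "gamma a b j = of_int (b * cseq a b (2 * j + 1) - 2 * dseq a b (2 * j))"
  using assms
  by (simp add: gamma_def coroot_pair_def invform_def beta1_def beta2_def cseq_dseq_01 field_simps)

lemma a_gamma_eq_b_eta:
  assumes "a \<noteq> 0" and "b \<noteq> 0"
  shows "of_int a * gamma a b j = of_int b * eta a b (2 * j)"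
proof -
  have "cseq a b (2 * j + 1) = dseq a b (2 * j + 1)" "b * cseq a b (2 * j) = a * dseq a b (2 * j)"
    using cseq_dseq_parity[of "2 * j + 1" a b] cseq_dseq_parity[of "2 * j" a b] by simp_all
  then have "a * (b * cseq a b (2 * j + 1) - 2 * dseq a b (2 * j)) = b * eta_int a b (2 * j)"
    by (simp add: eta_int_def algebra_simps)
  then show ?thesis
    unfolding gamma_eq_of_int[OF assms] eta_eq_of_int by (metis of_int_mult)
qed

lemma lucas_rec_eta_int: "lucas_rec (a * b - 2) (\<lambda>j. eta_int a b (2 * j + p))"
  using lucas_rec_lincomb[OF lucas_rec_dseq[of a b "p + 1"] lucas_rec_cseq[of a b p], of a "-2"]
  by (simp add: eta_int_def)

lemma eta_int_initial:
  "eta_int a b 0 = a" "eta_int a b 1 = a * b - 2"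
  "eta_int a b 2 = a * (a * b - 3)" "eta_int a b 3 = (a * b - 2)\<^sup>2 - 2"
  by (simp_all add: eta_int_def numeral_eq_Suc cseq_Suc_Suc dseq_Suc_Suc cseq_dseq_01
      algebra_simps power2_eq_square)

lemma cseq_dseq_2_2: "cseq 2 2 k = int k \<and> dseq 2 2 k = int k"
  by (induction "2::int" "2::int" k rule: cd.induct)
    (simp_all add: cseq_Suc_Suc dseq_Suc_Suc cseq_dseq_01)

lemma eta_int_2_2: "eta_int 2 2 k = 2"
  by (simp add: eta_int_def cseq_dseq_2_2)

lemma eta_int_strict_mono:
  assumes "b \<le> a" and "2 \<le> b" and "(a, b) \<noteq> (2, 2)"
  shows "strict_mono (eta_int a b)"
proof -
  define t where "t = a * b"
  have a: "3 \<le> a" using assms by auto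
  have t: "2 * a \<le> t" using assms a by (simp add: t_def mult_left_mono)
  have r: "2 \<le> t - 2" using a t by linarith
  have rec: "lucas_rec (t - 2) (\<lambda>j. eta_int a b (2 * j + p))" for p
    using lucas_rec_eta_int by (simp add: t_def)
  have e: "eta_int a b 0 = a" "eta_int a b 1 = t - 2" "eta_int a b 2 = a * (t - 3)"
    "eta_int a b 3 = (t - 2)\<^sup>2 - 2"
    using eta_int_initial[of a b] by (simp_all add: t_def)
  have e4: "eta_int a b 4 = (t - 2) * (a * (t - 3)) - a"
    using lucas_rec_ge2[OF rec[of 0], of 2] e by simp
  have even_step: "eta_int a b (2 * k) < eta_int a b (2 * k + 1)" for k
  proof -
    have "0 \<le> (t - 4) * (t - 1 - a)" using a t by simp
    also have "\<dots> = (eta_int a b 3 - eta_int a b 2) - (eta_int a b 1 - eta_int a b 0)"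
      unfolding e by (simp add: algebra_simps power2_eq_square)
    finally have d1: "0 \<le> (eta_int a b 3 - eta_int a b 2) - (eta_int a b 1 - eta_int a b 0)" .
    have d0: "0 < eta_int a b 1 - eta_int a b 0" using e a t by simp
    have "0 < eta_int a b (2 * k + 1) - eta_int a b (2 * k + 0)"
      by (rule lucas_rec_pos[OF r lucas_rec_diff[OF rec rec]])
        (use d0 d1 in \<open>simp_all add: eval_nat_numeral\<close>)
    then show ?thesis by simp
  qed
  have odd_step: "eta_int a b (2 * k + 1) < eta_int a b (2 * k + 2)" for k
  proof -
    have "2 * 2 \<le> (a - 1) * (t - 4)" using a t by (intro mult_mono) auto
    then have "0 \<le> (t - 2) * ((a - 1) * (t - 4) - 1) + 2" using t a by simp
    also have "\<dots> = (eta_int a b 4 - eta_int a b 3) - (eta_int a b 2 - eta_int a b 1)"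
      unfolding e e4 by (simp add: algebra_simps power2_eq_square)
    finally have d1: "0 \<le> (eta_int a b 4 - eta_int a b 3) - (eta_int a b 2 - eta_int a b 1)" .
    have "2 * 3 \<le> (a - 1) * (t - 3)" using a t by (intro mult_mono) auto
    then have d0: "0 < eta_int a b 2 - eta_int a b 1"
      unfolding e by (simp add: algebra_simps)
    have "0 < eta_int a b (2 * k + 2) - eta_int a b (2 * k + 1)"
      by (rule lucas_rec_pos[OF r lucas_rec_diff[OF rec rec]])
        (use d0 d1 in \<open>simp_all add: eval_nat_numeral\<close>)
    then show ?thesis by simp
  qed
  show ?thesis
  proof (rule strict_mono_Suc_iff[THEN iffD2], intro allI)
    fix n
    show "eta_int a b n < eta_int a b (Suc n)"
      using even_step[of "n div 2"] odd_step[of "n div 2"]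
      by (cases "even n") (auto elim!: evenE oddE)
  qed
qed

lemma eta_int_zigzag:
  assumes "5 \<le> a"
  shows "eta_int a 1 (2 * k + 1) < eta_int a 1 (2 * k) \<and> eta_int a 1 (2 * k) < eta_int a 1 (2 * k + 3)"
proof -
  have r: "2 \<le> a - 2" using assms by simp
  have rec: "lucas_rec (a - 2) (\<lambda>j. eta_int a 1 (2 * j + p))" for p
    using lucas_rec_eta_int[of a 1] by simp
  have e: "eta_int a 1 0 = a" "eta_int a 1 1 = a - 2" "eta_int a 1 2 = a * (a - 3)"
    "eta_int a 1 3 = (a - 2)\<^sup>2 - 2"
    using eta_int_initial[of a 1] by simp_all
  have e5: "eta_int a 1 5 = (a - 2) * ((a - 2)\<^sup>2 - 2) - (a - 2)"
    using lucas_rec_ge2[OF rec[of 1], of 2] e by simp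
  have down: "eta_int a 1 (2 * k + 1) < eta_int a 1 (2 * k)"
  proof -
    have "0 \<le> a - 4" using assms by simp
    also have "\<dots> = (eta_int a 1 2 - eta_int a 1 3) - (eta_int a 1 0 - eta_int a 1 1)"
      unfolding e by (simp add: algebra_simps power2_eq_square)
    finally have d1: "0 \<le> (eta_int a 1 2 - eta_int a 1 3) - (eta_int a 1 0 - eta_int a 1 1)" .
    have d0: "0 < eta_int a 1 0 - eta_int a 1 1" unfolding e by simp
    have "0 < eta_int a 1 (2 * k + 0) - eta_int a 1 (2 * k + 1)"
      by (rule lucas_rec_pos[OF r lucas_rec_diff[OF rec rec]])
        (use d0 d1 in \<open>simp_all add: eval_nat_numeral\<close>)
    then show ?thesis by simp
  qed
  have up: "eta_int a 1 (2 * k) < eta_int a 1 (2 * k + 3)"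
  proof -
    have "3\<^sup>2 \<le> (a - 2)\<^sup>2" using assms by (intro power_mono) auto
    then have "0 \<le> (a - 4) * ((a - 2)\<^sup>2 - 3)" using assms by simp
    also have "\<dots> = (eta_int a 1 5 - eta_int a 1 2) - (eta_int a 1 3 - eta_int a 1 0)"
      unfolding e e5 by (simp add: algebra_simps power2_eq_square)
    finally have d1: "0 \<le> (eta_int a 1 5 - eta_int a 1 2) - (eta_int a 1 3 - eta_int a 1 0)" .
    have "0 \<le> a * (a - 5)" using assms by simp
    then have d0: "0 < eta_int a 1 3 - eta_int a 1 0"
      unfolding e by (simp add: algebra_simps power2_eq_square)
    have "0 < eta_int a 1 (2 * k + 3) - eta_int a 1 (2 * k + 0)"
      by (rule lucas_rec_pos[OF r lucas_rec_diff[OF rec rec]])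
        (use d0 d1 in \<open>simp_all add: eval_nat_numeral\<close>)
    then show ?thesis by simp
  qed
  from down up show ?thesis ..
qed

theorem lemma3p8:
  fixes a b :: int
  assumes "a \<ge> b" and "b \<ge> 1" and "b \<ge> 2 \<or> (b = 1 \<and> a \<ge> 5)"
  shows "(\<forall>j\<ge>2. eta a b (2 * j) = real_of_int (a * b - 2) * eta a b (2 * (j - 1)) - eta a b (2 * (j - 2)))
       \<and> (\<forall>j\<ge>2. eta a b (2 * j + 1) = real_of_int (a * b - 2) * eta a b (2 * (j - 1) + 1) - eta a b (2 * (j - 2) + 1))
       \<and> eta a b 0 = real_of_int a
       \<and> eta a b 2 = real_of_int (a * (a * b - 3))
       \<and> eta a b 1 = real_of_int (a * b - 2)
       \<and> eta a b 3 = real_of_int ((a * b - 2)^2 - 2)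
       \<and> (\<forall>j. real_of_int a * gamma a b j = real_of_int b * eta a b (2 * j))
       \<and> (a = 2 \<and> b = 2 \<longrightarrow> (\<forall>j. eta a b j = eta a b 0))
       \<and> (b = 1 \<and> a \<ge> 5 \<longrightarrow>
            (\<forall>k. eta a b (2 * k + 1) < eta a b (2 * k) \<and> eta a b (2 * k) < eta a b (2 * k + 3)))
       \<and> (b \<ge> 2 \<and> (a, b) \<noteq> (2, 2) \<longrightarrow> strict_mono (eta a b))"
proof -
  have ab: "a \<noteq> 0" "b \<noteq> 0" using assms by auto
  have rec: "lucas_rec (of_int (a * b - 2)) (\<lambda>j. eta a b (2 * j + p))" for p
    using lucas_rec_of_int[OF lucas_rec_eta_int[of a b p]] by (simp add: eta_eq_of_int)
  have "\<forall>j\<ge>2. eta a b (2 * j) = of_int (a * b - 2) * eta a b (2 * (j - 1)) - eta a b (2 * (j - 2))"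
    using lucas_rec_ge2[OF rec[of 0]] by simp
  moreover have "\<forall>j\<ge>2. eta a b (2 * j + 1)
      = of_int (a * b - 2) * eta a b (2 * (j - 1) + 1) - eta a b (2 * (j - 2) + 1)"
    using lucas_rec_ge2[OF rec[of 1]] by simp
  moreover have "eta a b 0 = a" "eta a b 2 = a * (a * b - 3)"
    "eta a b 1 = a * b - 2" "eta a b 3 = (a * b - 2)\<^sup>2 - 2"
    unfolding eta_eq_of_int eta_int_initial by simp_all
  moreover have "\<forall>j. of_int a * gamma a b j = of_int b * eta a b (2 * j)"
    using a_gamma_eq_b_eta[OF ab] by blast
  moreover have "a = 2 \<and> b = 2 \<longrightarrow> (\<forall>j. eta a b j = eta a b 0)"
    by (simp add: eta_eq_of_int eta_int_2_2)
  moreover have "b = 1 \<and> 5 \<le> a \<longrightarrow>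
      (\<forall>k. eta a b (2 * k + 1) < eta a b (2 * k) \<and> eta a b (2 * k) < eta a b (2 * k + 3))"
    using eta_int_zigzag by (auto simp: eta_eq_of_int)
  moreover have "2 \<le> b \<and> (a, b) \<noteq> (2, 2) \<longrightarrow> strict_mono (eta a b)"
    using eta_int_strict_mono[OF assms(1)] by (auto simp: eta_eq_of_int strict_mono_def)
  ultimately show ?thesis by blast
qed

end
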